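(* Let $n\ge1$, let $G$ be a group and $H$ a subgroup of $G$ with $G=HZ_n(G)$. Then $(H,H)$ and $(H,G)$ are relatively $n$-isoclinic, and $(H,G)$ and $(G,G)$ are relatively $n$-isoclinic.
   Context: Commutators: $[x,y]=x^{-1}y^{-1}xy$, left-normed $[x_1,\dots,x_{m+1}]=[[x_1,\dots,x_m],x_{m+1}]$. $Z_n(G)$ is the $n$-th term of the upper central series. $[_nH,G]$ is the subgroup generated by all $[h_1,\dots,h_n,g]$, $h_i\in H$, $g\in G$. Relative $n$-isoclinism: for groups $G_1,G_2$ and subgroups $H_i\le G_i$, $(H_1,G_1)$ and $(H_2,G_2)$ are relatively $n$-isoclinic if there is a pair $(\alpha,\beta)$ such that: (i) $\alpha: G_1/Z_n(G_1)\to G_2/Z_n(G_2)$ is an isomorphism mapping $H_1Z_n(G_1)/Z_n(G_1)$ (identified with $H_1/(Z_n(G_1)\cap H_1)$) onto $H_2Z_n(G_2)/Z_n(G_2)$; (ii) $\beta:[_nH_1,G_1]\to[_nH_2,G_2]$ is an isomorphism; (iii) for all $h_1,\dots,h_n\in H_1$, $g\in G_1$: $\beta([h_1,\dots,h_n,g])=[k_1,\dots,k_n,g']$ whenever $k_i\in H_2$, $k_iZ_n(G_2)=\alpha(h_iZ_n(G_1))$ and $g'Z_n(G_2)=\alpha(gZ_n(G_1))$. *)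

theory Defs
  imports "HOL-Algebra.Algebra"
begin

definition comm :: "('a, 'b) monoid_scheme \<Rightarrow> 'a \<Rightarrow> 'a \<Rightarrow> 'a" where
  "comm G x y = inv\<^bsub>G\<^esub> x \<otimes>\<^bsub>G\<^esub> inv\<^bsub>G\<^esub> y \<otimes>\<^bsub>G\<^esub> x \<otimes>\<^bsub>G\<^esub> y"

fun lcomm :: "('a, 'b) monoid_scheme \<Rightarrow> 'a list \<Rightarrow> 'a" where
  "lcomm G [] = \<one>\<^bsub>G\<^esub>"
| "lcomm G (x # xs) = foldl (comm G) x xs"

text \<open>Upper central series: Z_0 = 1, Z_(n+1)/Z_n = Z(G/Z_n).\<close>
primrec upper_central :: "('a, 'b) monoid_scheme \<Rightarrow> nat \<Rightarrow> 'a set" where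
  "upper_central G 0 = {\<one>\<^bsub>G\<^esub>}"
| "upper_central G (Suc n) =
     {x \<in> carrier G. \<forall>y \<in> carrier G. comm G x y \<in> upper_central G n}"

definition rel_comm_sub :: "nat \<Rightarrow> 'a set \<Rightarrow> ('a, 'b) monoid_scheme \<Rightarrow> 'a set" where
  "rel_comm_sub n H G = generate G
     {lcomm G (hs @ [g]) | hs g. length hs = n \<and> set hs \<subseteq> H \<and> g \<in> carrier G}"

definition rel_n_isoclinic ::
  "nat \<Rightarrow> 'a set \<Rightarrow> ('a, 'b) monoid_scheme \<Rightarrow> 'c set \<Rightarrow> ('c, 'd) monoid_scheme \<Rightarrow> bool" where
  "rel_n_isoclinic n H1 G1 H2 G2 \<longleftrightarrow>
    (let Z1 = upper_central G1 n; Z2 = upper_central G2 n in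
     \<exists>\<alpha> \<beta>.
       \<alpha> \<in> iso (G1 Mod Z1) (G2 Mod Z2) \<and>
       \<alpha> ` ((\<lambda>h. Z1 #>\<^bsub>G1\<^esub> h) ` H1) = (\<lambda>k. Z2 #>\<^bsub>G2\<^esub> k) ` H2 \<and>
       \<beta> \<in> iso (subgroup_generated G1 (rel_comm_sub n H1 G1))
               (subgroup_generated G2 (rel_comm_sub n H2 G2)) \<and>
       (\<forall>hs g ks g'.
          length hs = n \<and> set hs \<subseteq> H1 \<and> g \<in> carrier G1 \<and>
          length ks = n \<and> set ks \<subseteq> H2 \<and> g' \<in> carrier G2 \<and>
          (\<forall>i<n. Z2 #>\<^bsub>G2\<^esub> (ks ! i) = \<alpha> (Z1 #>\<^bsub>G1\<^esub> (hs ! i))) \<and>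
          Z2 #>\<^bsub>G2\<^esub> g' = \<alpha> (Z1 #>\<^bsub>G1\<^esub> g)
          \<longrightarrow> \<beta> (lcomm G1 (hs @ [g])) = lcomm G2 (ks @ [g'])))"

end

theory Submission
  imports Defs
begin

(* The heart of the matter is that the left-normed commutator [x_1, ..., x_{n+1}] depends only on
   the cosets x_i Z_n(G) (lcomm_mod_upper_central).  This is proved by induction along the
   commutator, using that a commutator of weight p satisfies [c, Z_{k+p}] <= Z_k, which in turn
   follows from the three subgroup lemma (an element form of the Hall-Witt identity).

   Given G = H Z_n(G), i.e. H meets every coset of Z_n(G), every (n+1)-fold commutator can thus be
   rewritten with all entries in H.  Hence [_n H, H] = [_n H, G] = [_n G, G], and Z_n(H) = H /\ Z_n(G).
   The second isomorphism theorem gives H/Z_n(H) = H/(H /\ Z_n(G)) ~ G/Z_n(G) via hZ_n(H) |-> hZ_n(G).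
   Both isoclinisms then use this isomorphism (resp. the identity) on the central quotients and the
   identity on the commutator subgroups. *)

context group
begin

lemma cancel_left_inv [simp]: "x \<in> carrier G \<Longrightarrow> y \<in> carrier G \<Longrightarrow> x \<otimes> (inv x \<otimes> y) = y"
  by (simp add: m_assoc[symmetric])

lemma cancel_inv_left [simp]: "x \<in> carrier G \<Longrightarrow> y \<in> carrier G \<Longrightarrow> inv x \<otimes> (x \<otimes> y) = y"
  by (simp add: m_assoc[symmetric])

lemma comm_closed [simp]: "x \<in> carrier G \<Longrightarrow> y \<in> carrier G \<Longrightarrow> comm G x y \<in> carrier G"
  by (simp add: comm_def)

lemma lcomm_closed:
  assumes "set xs \<subseteq> carrier G"
  shows "lcomm G xs \<in> carrier G"
proof -
  have "foldl (comm G) x ys \<in> carrier G" if "x \<in> carrier G" "set ys \<subseteq> carrier G" for x ys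
    using that by (induction ys arbitrary: x) auto
  thus ?thesis using assms by (cases xs) auto
qed

lemma comm_one_left: "y \<in> carrier G \<Longrightarrow> comm G \<one> y = \<one>"
  by (simp add: comm_def)

lemma inv_comm: "x \<in> carrier G \<Longrightarrow> y \<in> carrier G \<Longrightarrow> inv (comm G x y) = comm G y x"
  by (simp add: comm_def m_assoc inv_mult_group)

lemma comm_mult_left: "x \<in> carrier G \<Longrightarrow> x' \<in> carrier G \<Longrightarrow> y \<in> carrier G \<Longrightarrow>
    comm G (x \<otimes> x') y = inv x' \<otimes> comm G x y \<otimes> x' \<otimes> comm G x' y"
  by (simp add: comm_def m_assoc inv_mult_group)

lemma comm_mult_right: "x \<in> carrier G \<Longrightarrow> y \<in> carrier G \<Longrightarrow> y' \<in> carrier G \<Longrightarrow>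
    comm G x (y \<otimes> y') = comm G x y' \<otimes> (inv y' \<otimes> comm G x y \<otimes> y')"
  by (simp add: comm_def m_assoc inv_mult_group)

lemma comm_inv_left: "x \<in> carrier G \<Longrightarrow> y \<in> carrier G \<Longrightarrow>
    comm G (inv x) y = x \<otimes> inv (comm G x y) \<otimes> inv x"
  by (simp add: comm_def m_assoc inv_mult_group)

lemma comm_inv_right: "x \<in> carrier G \<Longrightarrow> y \<in> carrier G \<Longrightarrow>
    comm G x (inv y) = y \<otimes> comm G y x \<otimes> inv y"
  by (simp add: comm_def m_assoc inv_mult_group)

lemma conj_eq_mult_comm: "x \<in> carrier G \<Longrightarrow> g \<in> carrier G \<Longrightarrow>
    g \<otimes> x \<otimes> inv g = x \<otimes> comm G x (inv g)"
  by (simp add: comm_def m_assoc inv_mult_group)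

lemma hall_witt:
  "x \<in> carrier G \<Longrightarrow> y \<in> carrier G \<Longrightarrow> z \<in> carrier G \<Longrightarrow>
    (y \<otimes> comm G (comm G x y) z \<otimes> inv y) \<otimes>
    ((inv z \<otimes> comm G (comm G (inv y) (inv z)) x \<otimes> z) \<otimes>
     (inv x \<otimes> comm G (comm G z (inv x)) (inv y) \<otimes> x)) = \<one>"
  by (simp add: comm_def m_assoc inv_mult_group)

lemma conj_in_normal: "N \<lhd> G \<Longrightarrow> a \<in> N \<Longrightarrow> g \<in> carrier G \<Longrightarrow> g \<otimes> a \<otimes> inv g \<in> N"
  by (simp add: normal_inv_iff)

lemma conj_inv_in_normal: "N \<lhd> G \<Longrightarrow> a \<in> N \<Longrightarrow> g \<in> carrier G \<Longrightarrow> inv g \<otimes> a \<otimes> g \<in> N"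
  using conj_in_normal[of N a "inv g"] by simp

lemma three_subgroup:
  assumes N: "N \<lhd> G" and x: "x \<in> carrier G" and y: "y \<in> carrier G" and z: "z \<in> carrier G"
    and yzx: "comm G (comm G (inv y) (inv z)) x \<in> N"
    and zxy: "comm G (comm G z (inv x)) (inv y) \<in> N"
  shows "comm G (comm G x y) z \<in> N"
proof -
  interpret N: subgroup N G using N by (rule normal_imp_subgroup)
  define A where "A = y \<otimes> comm G (comm G x y) z \<otimes> inv y"
  define B where "B = inv z \<otimes> comm G (comm G (inv y) (inv z)) x \<otimes> z"
  define C where "C = inv x \<otimes> comm G (comm G z (inv x)) (inv y) \<otimes> x"
  have "B \<otimes> C \<in> N"
    unfolding B_def C_def using conj_inv_in_normal[OF N] yzx zxy x z by simp
  moreover have "A = inv (B \<otimes> C)"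
    using hall_witt[OF x y z] x y z
    by (intro inv_equality[symmetric]) (simp_all add: A_def B_def C_def)
  ultimately have "A \<in> N" by simp
  hence "inv y \<otimes> A \<otimes> y \<in> N" using conj_inv_in_normal[OF N] y by blast
  thus ?thesis using x y z by (simp add: A_def m_assoc)
qed

lemma upper_central_subset: "upper_central G k \<subseteq> carrier G"
  by (cases k) auto

lemma upper_central_mono_Suc: "upper_central G k \<subseteq> upper_central G (Suc k)"
proof (induction k)
  case 0
  show ?case by (auto simp: comm_one_left)
next
  case (Suc k)
  thus ?case by auto
qed

lemma upper_central_normal: "upper_central G k \<lhd> G"
proof (induction k)
  case 0
  show ?case using one_is_normal by simp
next
  case (Suc k)
  let ?Z = "upper_central G k" and ?Z' = "upper_central G (Suc k)"
  interpret Z: subgroup ?Z G using Suc by (rule normal_imp_subgroup)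
  have sub: "subgroup ?Z' G"
  proof (rule subgroupI)
    show "?Z' \<subseteq> carrier G" by auto
    show "?Z' \<noteq> {}" using upper_central_mono_Suc[of k] Z.one_closed by blast
  next
    fix a assume a: "a \<in> ?Z'"
    hence ac: "a \<in> carrier G" by auto
    have "comm G (inv a) y \<in> ?Z" if y: "y \<in> carrier G" for y
      using conj_in_normal[OF Suc Z.m_inv_closed ac] a y by (auto simp: comm_inv_left)
    thus "inv a \<in> ?Z'" using ac by auto
  next
    fix a b assume a: "a \<in> ?Z'" and b: "b \<in> ?Z'"
    hence ac: "a \<in> carrier G" and bc: "b \<in> carrier G" by auto
    have "comm G (a \<otimes> b) y \<in> ?Z" if y: "y \<in> carrier G" for y
      using conj_inv_in_normal[OF Suc _ bc, of "comm G a y"] a b y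
      by (auto simp: comm_mult_left[OF ac bc y])
    thus "a \<otimes> b \<in> ?Z'" using ac bc by auto
  qed
  show ?case unfolding normal_inv_iff
  proof (intro conjI sub ballI)
    fix g h assume g: "g \<in> carrier G" and h: "h \<in> ?Z'"
    have "comm G h (inv g) \<in> ?Z'" using h g upper_central_mono_Suc[of k] by auto
    thus "g \<otimes> h \<otimes> inv g \<in> ?Z'"
      using conj_eq_mult_comm[of h g] subgroup.m_closed[OF sub h] h g by auto
  qed
qed

lemma upper_central_subgroup: "subgroup (upper_central G k) G"
  by (rule normal_imp_subgroup[OF upper_central_normal])

lemma comm_upper_central_left:
  "w \<in> upper_central G (Suc k) \<Longrightarrow> g \<in> carrier G \<Longrightarrow> comm G w g \<in> upper_central G k"
  by auto

lemma comm_upper_central_right: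
  assumes w: "w \<in> upper_central G (Suc k)" and g: "g \<in> carrier G"
  shows "comm G g w \<in> upper_central G k"
proof -
  have "inv (comm G w g) \<in> upper_central G k"
    using subgroup.m_inv_closed[OF upper_central_subgroup comm_upper_central_left[OF w g]] .
  thus ?thesis using w g upper_central_subset inv_comm by auto
qed

text \<open>This holds for every element of \<open>\<gamma>\<^sub>p(G)\<close>; we only need it for the left-normed
  commutators \<open>[x\<^sub>1, \<dots>, x\<^sub>p]\<close>, which is what the two lemmas after the definition give.\<close>
definition lowers_upper_central :: "nat \<Rightarrow> 'a \<Rightarrow> bool" where
  "lowers_upper_central p c \<longleftrightarrow> c \<in> carrier G \<and>
     (\<forall>k w. w \<in> upper_central G (k + p) \<longrightarrow> comm G c w \<in> upper_central G k)"

lemma lowers_upper_central_1: "c \<in> carrier G \<Longrightarrow> lowers_upper_central 1 c"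
  unfolding lowers_upper_central_def
  using comm_upper_central_right by (metis Suc_eq_plus1)

text \<open>The inductive step \<open>[\<gamma>\<^sub>p, G] \<subseteq> \<gamma>\<^sub>p\<^sub>+\<^sub>1\<close> in this form is the three subgroup lemma.\<close>
lemma lowers_upper_central_comm:
  assumes d: "lowers_upper_central p d" and y: "y \<in> carrier G"
  shows "lowers_upper_central (Suc p) (comm G d y)"
  unfolding lowers_upper_central_def
proof (intro conjI allI impI)
  have dc: "d \<in> carrier G" and d_low: "\<And>k w. w \<in> upper_central G (k + p) \<Longrightarrow> comm G d w \<in> upper_central G k"
    using d by (auto simp: lowers_upper_central_def)
  show "comm G d y \<in> carrier G" using dc y by simp
  fix k w assume w: "w \<in> upper_central G (k + Suc p)"
  have wc: "w \<in> carrier G" using w upper_central_subset by blast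
  have "inv w \<in> upper_central G (Suc (k + p))"
    using subgroup.m_inv_closed[OF upper_central_subgroup w] by simp
  hence "comm G (inv y) (inv w) \<in> upper_central G (k + p)"
    by (rule comm_upper_central_right[OF _ inv_closed[OF y]])
  hence "inv (comm G d (comm G (inv y) (inv w))) \<in> upper_central G k"
    by (rule subgroup.m_inv_closed[OF upper_central_subgroup d_low])
  hence yw_d: "comm G (comm G (inv y) (inv w)) d \<in> upper_central G k"
    using y wc dc by (simp add: inv_comm)
  have "w \<in> upper_central G (Suc k + p)" using w by (simp only: add_Suc add_Suc_right)
  hence "comm G d w \<in> upper_central G (Suc k)" by (rule d_low)
  hence "comm G w (inv d) \<in> upper_central G (Suc k)"
    unfolding comm_inv_right[OF wc dc] by (rule conj_in_normal[OF upper_central_normal _ dc])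
  hence wd_y: "comm G (comm G w (inv d)) (inv y) \<in> upper_central G k"
    by (rule comm_upper_central_left[OF _ inv_closed[OF y]])
  show "comm G (comm G d y) w \<in> upper_central G k"
    by (rule three_subgroup[OF upper_central_normal dc y wc yw_d wd_y])
qed

lemma comm_mod_upper_central:
  assumes a: "lowers_upper_central p a" and y: "y \<in> carrier G"
    and u: "u \<in> upper_central G (Suc k)" and v: "v \<in> upper_central G (k + p)"
  shows "comm G (u \<otimes> a) (v \<otimes> y) \<in> upper_central G k #> comm G a y"
proof -
  let ?Z = "upper_central G k"
  interpret Z: subgroup ?Z G by (rule upper_central_subgroup)
  have ac: "a \<in> carrier G" using a by (simp add: lowers_upper_central_def)
  have uc: "u \<in> carrier G" and vc: "v \<in> carrier G" using u v upper_central_subset by blast+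
  define c where "c = comm G a y"
  have cc: "c \<in> carrier G" using ac y by (simp add: c_def)
  define A where "A = inv a \<otimes> comm G u (v \<otimes> y) \<otimes> a"
  define B where "B = inv y \<otimes> comm G a v \<otimes> y"
  have A: "A \<in> ?Z"
    unfolding A_def using conj_inv_in_normal[OF upper_central_normal _ ac] u vc y by auto
  have "comm G a v \<in> ?Z" using a v by (simp add: lowers_upper_central_def)
  hence B: "B \<in> ?Z" unfolding B_def by (rule conj_inv_in_normal[OF upper_central_normal _ y])
  have Ac: "A \<in> carrier G" and Bc: "B \<in> carrier G" using A B by auto
  have "comm G (u \<otimes> a) (v \<otimes> y) = A \<otimes> (c \<otimes> B)"
    using comm_mult_left[OF uc ac, of "v \<otimes> y"] comm_mult_right[OF ac vc y] ac uc vc y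
    by (simp add: A_def B_def c_def m_assoc)
  also have "\<dots> = (A \<otimes> (c \<otimes> B \<otimes> inv c)) \<otimes> c" using Ac Bc cc by (simp add: m_assoc)
  finally show ?thesis
    using rcosI[OF Z.m_closed[OF A conj_in_normal[OF upper_central_normal B cc]] Z.subset cc]
    by (simp add: c_def)
qed

lemma foldl_comm_mod_upper_central:
  assumes "list_all2 (\<lambda>y y'. y \<in> carrier G \<and> y' \<in> upper_central G n #> y) ys ys'"
    and "lowers_upper_central p a" and "a' \<in> upper_central G (length ys) #> a"
    and "length ys + p = Suc n"
  shows "foldl (comm G) a' ys' = foldl (comm G) a ys"
  using assms
proof (induction ys ys' arbitrary: a a' p rule: list_all2_induct)
  case Nil
  thus ?case using lowers_upper_central_def by (auto simp: r_coset_def)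
next
  case (Cons y ys y' ys')
  obtain u where u: "u \<in> upper_central G (Suc (length ys))" and a': "a' = u \<otimes> a"
    using Cons.prems(2) by (auto simp: r_coset_def)
  obtain v where v: "v \<in> upper_central G (length ys + p)" and y': "y' = v \<otimes> y"
    using Cons.hyps(1) Cons.prems(3) by (auto simp: r_coset_def)
  have "comm G a' y' \<in> upper_central G (length ys) #> comm G a y"
    unfolding a' y' using comm_mod_upper_central[OF Cons.prems(1) _ u v] Cons.hyps(1) by blast
  moreover have "lowers_upper_central (Suc p) (comm G a y)"
    using lowers_upper_central_comm[OF Cons.prems(1)] Cons.hyps(1) by blast
  ultimately have "foldl (comm G) (comm G a' y') ys' = foldl (comm G) (comm G a y) ys"
    using Cons.IH Cons.prems(3) by simp
  thus ?case by simp
qed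

theorem lcomm_mod_upper_central:
  assumes rel: "list_all2 (\<lambda>x y. x \<in> carrier G \<and> y \<in> carrier G \<and>
      upper_central G n #> x = upper_central G n #> y) xs ys"
    and len: "length xs = Suc n"
  shows "lcomm G xs = lcomm G ys"
proof -
  have "list_all2 (\<lambda>x y. x \<in> carrier G \<and> y \<in> upper_central G n #> x) xs ys"
    using rel by (rule list_all2_mono) (auto intro: repr_independenceD[OF upper_central_subgroup])
  moreover obtain x xs' where "xs = x # xs'" using len by (cases xs) auto
  moreover obtain y ys' where "ys = y # ys'" using rel len by (cases ys) auto
  ultimately show ?thesis
    using foldl_comm_mod_upper_central[OF _ lowers_upper_central_1, of n xs' ys' x y] len by auto
qed

lemma upper_central_iff_lcomm:
  "x \<in> upper_central G n \<longleftrightarrow> x \<in> carrier G \<and>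
     (\<forall>ys. length ys = n \<and> set ys \<subseteq> carrier G \<longrightarrow> lcomm G (x # ys) = \<one>)"
proof (induction n arbitrary: x)
  case 0
  thus ?case by auto
next
  case (Suc n)
  have "(\<forall>ys. length ys = Suc n \<and> set ys \<subseteq> carrier G \<longrightarrow> foldl (comm G) x ys = \<one>) \<longleftrightarrow>
        (\<forall>y\<in>carrier G. \<forall>ys. length ys = n \<and> set ys \<subseteq> carrier G \<longrightarrow>
           foldl (comm G) (comm G x y) ys = \<one>)"
  proof (intro iffI ballI allI impI)
    fix y ys assume all: "\<forall>ys. length ys = Suc n \<and> set ys \<subseteq> carrier G \<longrightarrow> foldl (comm G) x ys = \<one>"
      and "y \<in> carrier G" and "length ys = n \<and> set ys \<subseteq> carrier G"
    thus "foldl (comm G) (comm G x y) ys = \<one>" using all[rule_format, of "y # ys"] by simp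
  next
    fix ys assume "\<forall>y\<in>carrier G. \<forall>ys. length ys = n \<and> set ys \<subseteq> carrier G \<longrightarrow>
        foldl (comm G) (comm G x y) ys = \<one>" and "length ys = Suc n \<and> set ys \<subseteq> carrier G"
    thus "foldl (comm G) x ys = \<one>" by (cases ys) auto
  qed
  thus ?case using Suc.IH by auto
qed

lemma lcomm_subgroup_generated:
  assumes H: "subgroup H G" and xs: "set xs \<subseteq> H"
  shows "lcomm (subgroup_generated G H) xs = lcomm G xs"
proof -
  have comm_eq: "comm (subgroup_generated G H) a b = comm G a b" if "a \<in> H" "b \<in> H" for a b
    using that subgroup.carrier_subgroup_generated_subgroup[OF H] by (simp add: comm_def)
  have comm_in: "comm G a b \<in> H" if "a \<in> H" "b \<in> H" for a b
    using that H by (simp add: comm_def subgroup.m_closed subgroup.m_inv_closed)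
  have "foldl (comm (subgroup_generated G H)) x ys = foldl (comm G) x ys"
    if "x \<in> H" "set ys \<subseteq> H" for x ys
    using that by (induction ys arbitrary: x) (simp_all add: comm_eq comm_in)
  thus ?thesis using xs by (cases xs) auto
qed

end

text \<open>\<open>H\<close> meets every coset of \<open>N\<close>; for normal \<open>N\<close> this says \<open>G = HN\<close>.\<close>
definition meets_every_coset :: "('a, 'b) monoid_scheme \<Rightarrow> 'a set \<Rightarrow> 'a set \<Rightarrow> bool" where
  "meets_every_coset G N H \<longleftrightarrow> (\<forall>g\<in>carrier G. \<exists>h\<in>H. N #>\<^bsub>G\<^esub> g = N #>\<^bsub>G\<^esub> h)"

definition comm_words :: "('a, 'b) monoid_scheme \<Rightarrow> nat \<Rightarrow> 'a set \<Rightarrow> 'a set \<Rightarrow> 'a set" where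
  "comm_words G n A B = {lcomm G (xs @ [y]) | xs y. length xs = n \<and> set xs \<subseteq> A \<and> y \<in> B}"

lemma rel_comm_sub_comm_words: "rel_comm_sub n H G = generate G (comm_words G n H (carrier G))"
  by (simp add: rel_comm_sub_def comm_words_def)

lemma comm_words_mono: "A \<subseteq> A' \<Longrightarrow> B \<subseteq> B' \<Longrightarrow> comm_words G n A B \<subseteq> comm_words G n A' B'"
  unfolding comm_words_def by blast

context group
begin

lemma meets_every_coset_if_supplement:
  assumes N: "N \<lhd> G" and H: "H \<subseteq> carrier G" and G: "carrier G = H <#> N"
  shows "meets_every_coset G N H"
  unfolding meets_every_coset_def
proof
  fix g assume "g \<in> carrier G"
  then obtain h z where hz: "h \<in> H" "z \<in> N" "g = h \<otimes> z"
    using G unfolding set_mult_def by blast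
  have hc: "h \<in> carrier G" using hz H by blast
  have "g \<in> h <# N" using hz by (auto simp: l_coset_def)
  hence "g \<in> N #> h" using normal.coset_eq[OF N] hc by simp
  thus "\<exists>h\<in>H. N #> g = N #> h"
    using repr_independence[OF _ hc normal_imp_subgroup[OF N]] hz by metis
qed

lemma lcomm_representatives:
  assumes H: "H \<subseteq> carrier G" and meets: "meets_every_coset G (upper_central G n) H"
  obtains f where "\<And>g. g \<in> carrier G \<Longrightarrow> f g \<in> H" and "\<And>h. h \<in> H \<Longrightarrow> f h = h"
    and "\<And>xs. length xs = Suc n \<Longrightarrow> set xs \<subseteq> carrier G \<Longrightarrow> lcomm G (map f xs) = lcomm G xs"
proof -
  let ?Z = "upper_central G n"
  define f where "f g = (if g \<in> H then g else SOME h. h \<in> H \<and> ?Z #> g = ?Z #> h)" for g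
  have f: "f g \<in> H \<and> ?Z #> g = ?Z #> f g" if "g \<in> carrier G" for g
    using meets that someI_ex[of "\<lambda>h. h \<in> H \<and> ?Z #> g = ?Z #> h"]
    by (auto simp: f_def meets_every_coset_def)
  have "lcomm G xs = lcomm G (map f xs)" if "length xs = Suc n" "set xs \<subseteq> carrier G" for xs
    using that f H by (intro lcomm_mod_upper_central) (auto simp: list_all2_map2 list_all2_same)
  with f show ?thesis by (intro that) (auto simp: f_def)
qed

lemma comm_words_representatives:
  assumes H: "H \<subseteq> carrier G" and meets: "meets_every_coset G (upper_central G n) H"
  shows "comm_words G n H H = comm_words G n (carrier G) (carrier G)"
proof
  show "comm_words G n H H \<subseteq> comm_words G n (carrier G) (carrier G)"
    by (rule comm_words_mono[OF H H])
  obtain f where fH: "\<And>g. g \<in> carrier G \<Longrightarrow> f g \<in> H"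
    and f: "\<And>xs. length xs = Suc n \<Longrightarrow> set xs \<subseteq> carrier G \<Longrightarrow> lcomm G (map f xs) = lcomm G xs"
    using lcomm_representatives[OF H meets] by metis
  show "comm_words G n (carrier G) (carrier G) \<subseteq> comm_words G n H H"
  proof
    fix c assume "c \<in> comm_words G n (carrier G) (carrier G)"
    then obtain xs y where xs: "length xs = n" "set xs \<subseteq> carrier G" and y: "y \<in> carrier G"
      and c: "c = lcomm G (xs @ [y])" by (auto simp: comm_words_def)
    have "c = lcomm G (map f xs @ [f y])" using f[of "xs @ [y]"] xs y c by simp
    moreover have "set (map f xs) \<subseteq> H" using xs fH by auto
    ultimately show "c \<in> comm_words G n H H"
      unfolding comm_words_def using xs fH[OF y] by (intro CollectI exI[of _ "map f xs"]) auto
  qed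
qed

lemma upper_central_subgroup_generated:
  assumes H: "subgroup H G" and meets: "meets_every_coset G (upper_central G n) H"
  shows "upper_central (subgroup_generated G H) n = H \<inter> upper_central G n"
proof -
  interpret G1: group "subgroup_generated G H" by simp
  have carrier1: "carrier (subgroup_generated G H) = H"
    by (rule subgroup.carrier_subgroup_generated_subgroup[OF H])
  have Hc: "H \<subseteq> carrier G" using H by (rule subgroup.subset)
  obtain f where fH: "\<And>g. g \<in> carrier G \<Longrightarrow> f g \<in> H" and f_id: "\<And>h. h \<in> H \<Longrightarrow> f h = h"
    and f: "\<And>xs. length xs = Suc n \<Longrightarrow> set xs \<subseteq> carrier G \<Longrightarrow> lcomm G (map f xs) = lcomm G xs"
    using lcomm_representatives[OF Hc meets] by metis
  have "(\<forall>ys. length ys = n \<and> set ys \<subseteq> H \<longrightarrow> lcomm G (x # ys) = \<one>) \<longleftrightarrow>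
        (\<forall>ys. length ys = n \<and> set ys \<subseteq> carrier G \<longrightarrow> lcomm G (x # ys) = \<one>)"
    if x: "x \<in> H" for x
  proof (intro iffI allI impI)
    fix ys assume all_H: "\<forall>ys. length ys = n \<and> set ys \<subseteq> H \<longrightarrow> lcomm G (x # ys) = \<one>"
      and ys: "length ys = n \<and> set ys \<subseteq> carrier G"
    have "lcomm G (x # ys) = lcomm G (x # map f ys)"
      using f[of "x # ys"] f_id[OF x] x ys Hc by auto
    also have "\<dots> = \<one>" using all_H[rule_format, of "map f ys"] ys fH by auto
    finally show "lcomm G (x # ys) = \<one>" .
  qed (use Hc in auto)
  hence "x \<in> upper_central (subgroup_generated G H) n \<longleftrightarrow> x \<in> H \<inter> upper_central G n" for x
    unfolding upper_central_iff_lcomm G1.upper_central_iff_lcomm carrier1 Int_iff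
    using lcomm_subgroup_generated[OF H, of "x # _"] Hc by auto
  thus ?thesis by blast
qed

lemma lcomm_append_mod_upper_central:
  assumes "length hs = n" "length ks = n" "set hs \<subseteq> carrier G" "set ks \<subseteq> carrier G"
    and "g \<in> carrier G" "g' \<in> carrier G"
    and "\<forall>i<n. upper_central G n #> ks ! i = upper_central G n #> hs ! i"
    and "upper_central G n #> g' = upper_central G n #> g"
  shows "lcomm G (hs @ [g]) = lcomm G (ks @ [g'])"
  using assms
  by (intro lcomm_mod_upper_central list_all2_appendI)
     (auto simp: list_all2_conv_all_nth dest: nth_mem)

lemma quotient_iso_supplement:
  assumes H: "subgroup H G" and N: "N \<lhd> G" and meets: "meets_every_coset G N H"
  obtains \<alpha> where "\<alpha> \<in> iso (subgroup_generated G H Mod (H \<inter> N)) (G Mod N)"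
    and "\<And>h. h \<in> H \<Longrightarrow> \<alpha> ((H \<inter> N) #>\<^bsub>subgroup_generated G H\<^esub> h) = N #> h"
proof -
  let ?G1 = "subgroup_generated G H"
  interpret N: normal N G by (rule N)
  interpret G1: group ?G1 by simp
  have carrier1: "carrier ?G1 = H" by (rule subgroup.carrier_subgroup_generated_subgroup[OF H])
  have Hc: "H \<subseteq> carrier G" using H by (rule subgroup.subset)
  define \<phi> where "\<phi> h = N #> h" for h
  have hom: "\<phi> \<in> hom ?G1 (G Mod N)"
  proof (rule homI)
    fix x assume "x \<in> carrier ?G1"
    thus "\<phi> x \<in> carrier (G Mod N)" using Hc by (auto simp: \<phi>_def carrier1 carrier_FactGroup)
  next
    fix x y assume "x \<in> carrier ?G1" "y \<in> carrier ?G1"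
    hence "x \<in> carrier G" "y \<in> carrier G" using Hc carrier1 by auto
    thus "\<phi> (x \<otimes>\<^bsub>?G1\<^esub> y) = \<phi> x \<otimes>\<^bsub>G Mod N\<^esub> \<phi> y" by (simp add: \<phi>_def N.rcos_sum)
  qed
  interpret \<phi>: group_hom ?G1 "G Mod N" \<phi>
    by (intro group_hom.intro group_hom_axioms.intro G1.is_group N.factorgroup_is_group hom)
  have kernel: "kernel ?G1 (G Mod N) \<phi> = H \<inter> N"
  proof -
    have "N #> x = N \<longleftrightarrow> x \<in> N" if "x \<in> H" for x
      using that Hc coset_join1[OF _ _ N.subgroup_axioms] coset_join2[OF _ N.subgroup_axioms] by blast
    thus ?thesis unfolding kernel_def carrier1 \<phi>_def one_FactGroup by blast
  qed
  have onto: "\<phi> ` carrier ?G1 = carrier (G Mod N)"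
  proof -
    have "(\<lambda>x. N #> x) ` H = (\<lambda>x. N #> x) ` carrier G"
      using meets Hc unfolding meets_every_coset_def by (auto simp: image_iff)
    thus ?thesis unfolding carrier1 carrier_FactGroup \<phi>_def by simp
  qed
  have coset_image: "\<phi> ` ((H \<inter> N) #> h) = {N #> h}" if h: "h \<in> H" for h
  proof (intro equalityI subsetI)
    have hc: "h \<in> carrier G" using h Hc by blast
    fix Y assume "Y \<in> \<phi> ` ((H \<inter> N) #> h)"
    then obtain z where z: "z \<in> H \<inter> N" and Y: "Y = N #> (z \<otimes> h)"
      by (auto simp: r_coset_def \<phi>_def)
    have zc: "z \<in> carrier G" using z Hc by blast
    have "N #> (z \<otimes> h) = (N #> z) #> h" by (rule coset_mult_assoc[OF N.subset zc hc, symmetric])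
    also have "N #> z = N" using coset_join2[OF zc N.subgroup_axioms] z by blast
    finally show "Y \<in> {N #> h}" using Y by simp
  next
    have hc: "h \<in> carrier G" using h Hc by blast
    fix Y assume "Y \<in> {N #> h}"
    moreover have "\<one> \<otimes> h \<in> (H \<inter> N) #> h"
      using H N.one_closed subgroup.one_closed by (force simp: r_coset_def)
    ultimately show "Y \<in> \<phi> ` ((H \<inter> N) #> h)" using hc by (force simp: \<phi>_def)
  qed
  have "r_coset ?G1 = r_coset G" by (intro ext) (simp add: r_coset_def)
  hence "the_elem (\<phi> ` ((H \<inter> N) #>\<^bsub>?G1\<^esub> h)) = N #> h" if "h \<in> H" for h
    using coset_image[OF that] by simp
  thus ?thesis
    using that \<phi>.FactGroup_iso_set[OF onto] unfolding kernel by blast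
qed

lemma subgroup_generated_subgroup:
  "subgroup H G \<Longrightarrow> subgroup_generated G H = G\<lparr>carrier := H\<rparr>"
  using subgroup.carrier_subgroup_generated_subgroup[of H G]
  unfolding carrier_subgroup_generated subgroup_generated_def by simp

lemma subgroup_generated_in_subgroup:
  assumes H: "subgroup H G" and S: "S \<subseteq> H"
  shows "subgroup_generated (subgroup_generated G H) S = subgroup_generated G S"
proof -
  have "carrier G \<inter> S = S" "H \<inter> S = S" using S subgroup.subset[OF H] by auto
  hence "subgroup_generated (G\<lparr>carrier := H\<rparr>) S = subgroup_generated G S"
    using generate_consistent[OF S H] unfolding subgroup_generated_def by simp
  thus ?thesis by (simp only: subgroup_generated_subgroup[OF H])
qed

lemma comm_words_supplement:
  assumes H: "H \<subseteq> carrier G" and meets: "meets_every_coset G (upper_central G n) H"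
  shows "comm_words G n H (carrier G) = comm_words G n H H"
  using comm_words_mono[of H H H "carrier G" G n] comm_words_mono[of H "carrier G" "carrier G" "carrier G" G n] H
    comm_words_representatives[OF H meets] by blast

lemma rel_n_isoclinic_subgroup_group:
  assumes H: "subgroup H G" and meets: "meets_every_coset G (upper_central G n) H"
  shows "rel_n_isoclinic n H G (carrier G) G"
proof -
  let ?Z = "upper_central G n"
  have Hc: "H \<subseteq> carrier G" using H by (rule subgroup.subset)
  have cosets: "(\<lambda>k. ?Z #> k) ` H = (\<lambda>k. ?Z #> k) ` carrier G"
    using meets Hc by (auto simp: meets_every_coset_def image_iff)
  have gens: "rel_comm_sub n H G = rel_comm_sub n (carrier G) G"
    unfolding rel_comm_sub_comm_words
    using comm_words_representatives[OF Hc meets] comm_words_supplement[OF Hc meets] by simp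
  show ?thesis
    unfolding rel_n_isoclinic_def Let_def
  proof (intro exI[of _ "\<lambda>x. x"] conjI allI impI)
    show "(\<lambda>x. x) \<in> iso (G Mod ?Z) (G Mod ?Z)" by (rule iso_set_refl)
    show "(\<lambda>x. x) ` (\<lambda>h. ?Z #> h) ` H = (\<lambda>k. ?Z #> k) ` carrier G" using cosets by simp
    show "(\<lambda>x. x) \<in> iso (subgroup_generated G (rel_comm_sub n H G))
        (subgroup_generated G (rel_comm_sub n (carrier G) G))"
      unfolding gens by (rule iso_set_refl)
    fix hs g ks g'
    assume "length hs = n \<and> set hs \<subseteq> H \<and> g \<in> carrier G \<and>
      length ks = n \<and> set ks \<subseteq> carrier G \<and> g' \<in> carrier G \<and>
      (\<forall>i<n. ?Z #> ks ! i = ?Z #> hs ! i) \<and> ?Z #> g' = ?Z #> g"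
    thus "lcomm G (hs @ [g]) = lcomm G (ks @ [g'])"
      using Hc by (intro lcomm_append_mod_upper_central) auto
  qed
qed

lemma rel_n_isoclinic_subgroup_self:
  assumes H: "subgroup H G" and meets: "meets_every_coset G (upper_central G n) H"
  shows "rel_n_isoclinic n H (subgroup_generated G H) H G"
proof -
  let ?G1 = "subgroup_generated G H" and ?Z = "upper_central G n"
  interpret G1: group ?G1 by simp
  have Hc: "H \<subseteq> carrier G" using H by (rule subgroup.subset)
  have carrier1: "carrier ?G1 = H" by (rule subgroup.carrier_subgroup_generated_subgroup[OF H])
  obtain \<alpha> where \<alpha>: "\<alpha> \<in> iso (?G1 Mod (H \<inter> ?Z)) (G Mod ?Z)"
    and \<alpha>_coset: "\<And>h. h \<in> H \<Longrightarrow> \<alpha> ((H \<inter> ?Z) #>\<^bsub>?G1\<^esub> h) = ?Z #> h"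
    using quotient_iso_supplement[OF H upper_central_normal meets] by blast
  have lcomm1: "lcomm ?G1 (xs @ [y]) = lcomm G (xs @ [y])" if "set xs \<subseteq> H" "y \<in> H" for xs y
    using that by (intro lcomm_subgroup_generated[OF H]) auto
  have words1: "comm_words ?G1 n H H = comm_words G n H H"
    unfolding comm_words_def using lcomm1 by (metis (no_types, opaque_lifting))
  have words_H: "comm_words G n H H \<subseteq> H"
  proof
    fix c assume "c \<in> comm_words G n H H"
    then obtain xs y where "set xs \<subseteq> H" "y \<in> H" "c = lcomm ?G1 (xs @ [y])"
      by (auto simp: comm_words_def lcomm1)
    thus "c \<in> H" using G1.lcomm_closed[of "xs @ [y]"] carrier1 by simp
  qed
  have gens_G: "rel_comm_sub n H G = generate G (comm_words G n H H)"
    unfolding rel_comm_sub_comm_words comm_words_supplement[OF Hc meets] ..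
  have "rel_comm_sub n H ?G1 = generate ?G1 (comm_words G n H H)"
    unfolding rel_comm_sub_comm_words carrier1 words1 ..
  also have "\<dots> = generate G (comm_words G n H H)"
    unfolding subgroup_generated_subgroup[OF H] by (rule generate_consistent[OF words_H H])
  finally have gens_G1: "rel_comm_sub n H ?G1 = generate G (comm_words G n H H)" .
  have gens: "subgroup_generated ?G1 (rel_comm_sub n H ?G1) =
      subgroup_generated G (rel_comm_sub n H G)"
    unfolding gens_G gens_G1
    by (rule subgroup_generated_in_subgroup[OF H generate_subgroup_incl[OF words_H H]])
  show ?thesis
    unfolding rel_n_isoclinic_def Let_def upper_central_subgroup_generated[OF H meets]
  proof (intro exI[of _ \<alpha>] exI[of _ "\<lambda>x. x"] conjI allI impI)
    show "\<alpha> \<in> iso (?G1 Mod (H \<inter> ?Z)) (G Mod ?Z)" by (rule \<alpha>)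
    show "\<alpha> ` (\<lambda>h. (H \<inter> ?Z) #>\<^bsub>?G1\<^esub> h) ` H = (\<lambda>k. ?Z #> k) ` H"
      using \<alpha>_coset by (auto simp: image_iff)
    show "(\<lambda>x. x) \<in> iso (subgroup_generated ?G1 (rel_comm_sub n H ?G1))
        (subgroup_generated G (rel_comm_sub n H G))"
      unfolding gens by (rule iso_set_refl)
    fix hs g ks g'
    assume a: "length hs = n \<and> set hs \<subseteq> H \<and> g \<in> carrier ?G1 \<and>
      length ks = n \<and> set ks \<subseteq> H \<and> g' \<in> carrier G \<and>
      (\<forall>i<n. ?Z #> ks ! i = \<alpha> ((H \<inter> ?Z) #>\<^bsub>?G1\<^esub> hs ! i)) \<and>
      ?Z #> g' = \<alpha> ((H \<inter> ?Z) #>\<^bsub>?G1\<^esub> g)"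
    hence "lcomm G (hs @ [g]) = lcomm G (ks @ [g'])"
      using Hc \<alpha>_coset carrier1 by (intro lcomm_append_mod_upper_central) (auto dest: nth_mem)
    thus "lcomm ?G1 (hs @ [g]) = lcomm G (ks @ [g'])" using a carrier1 lcomm1 by simp
  qed
qed

end

theorem lemma2p3:
  fixes G :: "('a, 'b) monoid_scheme" and H :: "'a set" and n :: nat
  assumes "group G" and "subgroup H G" and "n \<ge> 1"
    and "carrier G = H <#>\<^bsub>G\<^esub> upper_central G n"
  shows "rel_n_isoclinic n H (subgroup_generated G H) H G
       \<and> rel_n_isoclinic n H G (carrier G) G"
proof -
  interpret group G by fact
  have "meets_every_coset G (upper_central G n) H"
    by (rule meets_every_coset_if_supplement[OF upper_central_normal subgroup.subset[OF assms(2)] assms(4)])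
  thus ?thesis
    using rel_n_isoclinic_subgroup_self rel_n_isoclinic_subgroup_group assms(2) by blast
qed

end
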